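(* Let $n$ be the number of validators and let $f\in[0,n]$. If two conflicting chains are finalized according to any two respective views, then at least $\frac{n}{3}$ validators can be detected (from the messages in those views) to have violated either $\mathbf{E_1}$ or $\mathbf{E_2}$.
   Context: A set of $n$ validators exchange signed messages. A block is a pair $B=(b,p)$ where $b$ is a body (containing a reference to a parent block) and $p\ge 0$ is its slot; a parent always has strictly smaller slot; the genesis block $B_{\text{genesis}}=(b_{-1},-1)$ has no parent. Chains are identified with their last block; $\chi.p$ is the slot of its last block; $\preceq$ is the prefix relation and two chains conflict if neither is a prefix of the other. A view is a set of messages. A checkpoint is $\mathcal{C}=(\chi,c)$ with $c$ a slot. An FFG-vote $\mathcal{C}_1\to\mathcal{C}_2$ (source, target) is valid iff $\mathcal{C}_1.c<\mathcal{C}_2.c$ and $\mathcal{C}_1.\chi\preceq\mathcal{C}_2.\chi$; FFG-votes are carried inside VOTE messages of validators. In a view $\mathcal{V}$: $\mathcal{C}$ is justified iff $\mathcal{C}=(B_{\text{genesis}},0)$ or there is a set of VOTE messages in $\mathcal{V}$ from at least $\frac{2}{3}n$ distinct validators whose FFG-votes $\mathcal{S}\to\mathcal{T}$ are all valid, with $\mathcal{S}$ justified in $\mathcal{V}$, $\mathcal{S}.\chi\preceq\mathcal{C}.\chi\preceq\mathcal{T}.\chi$ and $\mathcal{T}.c=\mathcal{C}.c$. $\mathcal{C}$ is finalized iff $\mathcal{C}=(B_{\text{genesis}},0)$ or $\mathcal{C}$ is justified and there is a set of VOTE messages in $\mathcal{V}$ from at least $\frac{2}{3}n$ distinct validators each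 carrying a valid FFG-vote $\mathcal{C}\to\mathcal{T}$ with $\mathcal{T}.c=\mathcal{C}.c+1$. A chain $\chi$ is finalized according to $\mathcal{V}$ iff $\chi\preceq\mathcal{C}.\chi$ for some checkpoint $\mathcal{C}$ finalized in $\mathcal{V}$. Checkpoint preorder: $\mathcal{C}\le\mathcal{C}'$ iff $\mathcal{C}.c<\mathcal{C}'.c$, or $\mathcal{C}.c=\mathcal{C}'.c$ and $\mathcal{C}.\chi.p\le\mathcal{C}'.\chi.p$; $\mathcal{C}<\mathcal{C}'$ means $\mathcal{C}\le\mathcal{C}'$ and not $\mathcal{C}'\le\mathcal{C}$. A validator violates $\mathbf{E_1}$ if it sent two distinct FFG-votes $\mathcal{C}_1\to\mathcal{C}_2$, $\mathcal{C}_3\to\mathcal{C}_4$ with $\mathcal{C}_2.c=\mathcal{C}_4.c$; it violates $\mathbf{E_2}$ if it sent two distinct FFG-votes with $\mathcal{C}_3<\mathcal{C}_1$ and $\mathcal{C}_2.c<\mathcal{C}_4.c$. *)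

theory Defs
  imports Complex_Main
begin

text \<open>Blocks form an abstract type 'b equipped with a parent map, a slot map and a
  distinguished genesis block.  Chains are identified with their last block.\<close>

definition block_structure :: "('b \<Rightarrow> 'b option) \<Rightarrow> ('b \<Rightarrow> int) \<Rightarrow> 'b \<Rightarrow> bool" where
  "block_structure parent slot genesis \<longleftrightarrow>
     parent genesis = None \<and> slot genesis = -1 \<and>
     (\<forall>b. b \<noteq> genesis \<longrightarrow> slot b \<ge> 0 \<and> (\<exists>b'. parent b = Some b')) \<and>
     (\<forall>b b'. parent b = Some b' \<longrightarrow> slot b' < slot b)"

definition prefix_chain :: "('b \<Rightarrow> 'b option) \<Rightarrow> 'b \<Rightarrow> 'b \<Rightarrow> bool" where
  "prefix_chain parent x y \<longleftrightarrow> (y, x) \<in> {(b, b'). parent b = Some b'}\<^sup>*"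

definition conflicting :: "('b \<Rightarrow> 'b option) \<Rightarrow> 'b \<Rightarrow> 'b \<Rightarrow> bool" where
  "conflicting parent x y \<longleftrightarrow> \<not> prefix_chain parent x y \<and> \<not> prefix_chain parent y x"

text \<open>Checkpoints (chain, slot); a VOTE message is represented by its sender (a validator
  index < n) and its FFG-vote (source, target).  A view is a set of such messages.\<close>
type_synonym 'b checkpoint = "'b \<times> int"
type_synonym 'b vote_msg = "nat \<times> 'b checkpoint \<times> 'b checkpoint"

definition valid_ffg :: "('b \<Rightarrow> 'b option) \<Rightarrow> 'b checkpoint \<Rightarrow> 'b checkpoint \<Rightarrow> bool" where
  "valid_ffg parent S T \<longleftrightarrow> snd S < snd T \<and> prefix_chain parent (fst S) (fst T)"

inductive justified ::
  "('b \<Rightarrow> 'b option) \<Rightarrow> 'b \<Rightarrow> nat \<Rightarrow> 'b vote_msg set \<Rightarrow> 'b checkpoint \<Rightarrow> bool"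
  for parent genesis n V where
  genesis_just: "justified parent genesis n V (genesis, 0)"
| quorum_just: "\<lbrakk> Q \<subseteq> {..<n}; real (card Q) \<ge> 2/3 * real n;
     \<forall>v\<in>Q. \<exists>S T. (v, S, T) \<in> V \<and> valid_ffg parent S T \<and> justified parent genesis n V S \<and>
        prefix_chain parent (fst S) (fst C) \<and> prefix_chain parent (fst C) (fst T) \<and>
        snd T = snd C \<rbrakk>
   \<Longrightarrow> justified parent genesis n V C"

definition finalized ::
  "('b \<Rightarrow> 'b option) \<Rightarrow> 'b \<Rightarrow> nat \<Rightarrow> 'b vote_msg set \<Rightarrow> 'b checkpoint \<Rightarrow> bool" where
  "finalized parent genesis n V C \<longleftrightarrow> C = (genesis, 0) \<or>
     (justified parent genesis n V C \<and>
      (\<exists>Q \<subseteq> {..<n}. real (card Q) \<ge> 2/3 * real n \<and>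
         (\<forall>v\<in>Q. \<exists>T. (v, C, T) \<in> V \<and> valid_ffg parent C T \<and> snd T = snd C + 1)))"

definition chain_finalized ::
  "('b \<Rightarrow> 'b option) \<Rightarrow> 'b \<Rightarrow> nat \<Rightarrow> 'b vote_msg set \<Rightarrow> 'b \<Rightarrow> bool" where
  "chain_finalized parent genesis n V x \<longleftrightarrow>
     (\<exists>C. finalized parent genesis n V C \<and> prefix_chain parent x (fst C))"

definition ck_le :: "('b \<Rightarrow> int) \<Rightarrow> 'b checkpoint \<Rightarrow> 'b checkpoint \<Rightarrow> bool" where
  "ck_le slot C C' \<longleftrightarrow> snd C < snd C' \<or> (snd C = snd C' \<and> slot (fst C) \<le> slot (fst C'))"

definition ck_less :: "('b \<Rightarrow> int) \<Rightarrow> 'b checkpoint \<Rightarrow> 'b checkpoint \<Rightarrow> bool" where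
  "ck_less slot C C' \<longleftrightarrow> ck_le slot C C' \<and> \<not> ck_le slot C' C"

definition violates_E1 :: "'b vote_msg set \<Rightarrow> nat \<Rightarrow> bool" where
  "violates_E1 M v \<longleftrightarrow> (\<exists>C1 C2 C3 C4. (v, C1, C2) \<in> M \<and> (v, C3, C4) \<in> M \<and>
      (C1, C2) \<noteq> (C3, C4) \<and> snd C2 = snd C4)"

definition violates_E2 :: "('b \<Rightarrow> int) \<Rightarrow> 'b vote_msg set \<Rightarrow> nat \<Rightarrow> bool" where
  "violates_E2 slot M v \<longleftrightarrow> (\<exists>C1 C2 C3 C4. (v, C1, C2) \<in> M \<and> (v, C3, C4) \<in> M \<and>
      (C1, C2) \<noteq> (C3, C4) \<and> ck_less slot C3 C1 \<and> snd C2 < snd C4)"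

end

theory Submission
  imports Defs
begin

text \<open>Any two supermajorities of the \<open>n\<close> validators share at least \<open>n/3\<close> members.
  Let \<open>C\<^sub>1\<close>, \<open>C\<^sub>2\<close> be finalized checkpoints extending the two conflicting chains.  If they
  have the same epoch, every common member of their justification quorums voted for two
  different targets of that epoch (\<open>E\<^sub>1\<close>).  Otherwise let \<open>C\<^sub>1\<close> have the smaller epoch.  If
  some checkpoint of epoch \<open>C\<^sub>1.c\<close> justified in the second view conflicts with \<open>C\<^sub>1\<close>, we are
  in the first case.  If not, among the checkpoints justified in the second view with epoch
  above \<open>C\<^sub>1.c\<close> that do not extend \<open>C\<^sub>1\<close>, take one, \<open>J\<close>, of least epoch.  A common member
  of the finality quorum of \<open>C\<^sub>1\<close> and the justification quorum of \<open>J\<close> voted \<open>C\<^sub>1 \<rightarrow> T'\<close> with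
  \<open>T'.c = C\<^sub>1.c + 1\<close> and \<open>S \<rightarrow> T\<close> with \<open>T.c = J.c\<close>; minimality of \<open>J\<close> forces \<open>S < C\<^sub>1\<close>, so
  either the target epochs coincide (\<open>E\<^sub>1\<close>) or the second vote surrounds the first (\<open>E\<^sub>2\<close>).\<close>

lemma ex_least_int_bounded_below:
  fixes f :: "'a \<Rightarrow> int"
  assumes "P x" and "\<And>y. P y \<Longrightarrow> a \<le> f y"
  obtains y where "P y" and "\<And>z. P z \<Longrightarrow> f y \<le> f z"
proof -
  obtain y where "P y" and least: "\<And>z. P z \<Longrightarrow> nat (f y - a) \<le> nat (f z - a)"
    using ex_has_least_nat[of P x "\<lambda>y. nat (f y - a)"] assms(1) by blast
  moreover have "f y \<le> f z" if "P z" for z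
    using least[OF that] assms(2)[OF that] by (simp add: nat_le_eq_zle)
  ultimately show thesis
    using that by blast
qed

lemma prefix_chain_refl: "prefix_chain parent x x"
  by (simp add: prefix_chain_def)

lemma prefix_chain_trans:
  "prefix_chain parent x y \<Longrightarrow> prefix_chain parent y z \<Longrightarrow> prefix_chain parent x z"
  unfolding prefix_chain_def by (meson rtrancl_trans)

lemma prefix_chain_linear:
  assumes "prefix_chain parent a c" and "prefix_chain parent b c"
  shows "prefix_chain parent a b \<or> prefix_chain parent b a"
proof -
  have "single_valued {(b, b'). parent b = Some b'}"
    by (auto simp: single_valued_def)
  from single_valued_confluent[OF this] show ?thesis
    using assms unfolding prefix_chain_def by blast
qed

lemma conflicting_extensions:
  assumes "conflicting parent x1 x2"
    and "prefix_chain parent x1 y1" and "prefix_chain parent x2 y2"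
  shows "conflicting parent y1 y2"
proof -
  have "\<not> prefix_chain parent y1 y2"
  proof
    assume "prefix_chain parent y1 y2"
    with assms(2) have "prefix_chain parent x1 y2"
      by (rule prefix_chain_trans)
    from prefix_chain_linear[OF this assms(3)] show False
      using assms(1) unfolding conflicting_def by blast
  qed
  moreover have "\<not> prefix_chain parent y2 y1"
  proof
    assume "prefix_chain parent y2 y1"
    with assms(3) have "prefix_chain parent x2 y1"
      by (rule prefix_chain_trans)
    from prefix_chain_linear[OF this assms(2)] show False
      using assms(1) unfolding conflicting_def by blast
  qed
  ultimately show ?thesis
    unfolding conflicting_def ..
qed

lemma prefix_chain_slot_less:
  assumes "block_structure parent slot genesis"
    and "prefix_chain parent a b" and "a \<noteq> b"
  shows "slot a < slot b"
proof -
  have "(b, a) \<in> {(b, b'). parent b = Some b'}\<^sup>+"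
    using assms(2,3) rtranclD[of b a] unfolding prefix_chain_def by auto
  then show ?thesis
    by induction (use assms(1) in \<open>force simp: block_structure_def\<close>)+
qed

lemma prefix_chain_genesis:
  assumes bs: "block_structure parent slot genesis"
  shows "prefix_chain parent genesis b"
proof (induction "nat (slot b + 1)" arbitrary: b rule: less_induct)
  case less
  show ?case
  proof (cases "b = genesis")
    case False
    then obtain b' where b': "parent b = Some b'" and "slot b \<ge> 0"
      using bs unfolding block_structure_def by blast
    moreover have "slot b' < slot b"
      using bs b' unfolding block_structure_def by blast
    moreover have "slot b' \<ge> -1"
      using bs unfolding block_structure_def by (cases "b' = genesis") auto
    ultimately have "prefix_chain parent genesis b'"
      using less by simp
    moreover have "prefix_chain parent b' b"
      using b' unfolding prefix_chain_def by auto
    ultimately show ?thesis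
      by (rule prefix_chain_trans)
  qed (simp add: prefix_chain_refl)
qed

text \<open>For \<open>n = 0\<close> the empty set is a quorum and every checkpoint is justified.\<close>

lemma justified_epoch_nonneg:
  assumes "justified parent genesis n V C" and "n > 0"
  shows "snd C \<ge> 0"
  using assms
proof (induction rule: justified.induct)
  case (quorum_just Q C)
  then have "Q \<noteq> {}"
    by auto
  with quorum_just.IH quorum_just.prems show ?case
    unfolding valid_ffg_def by fastforce
qed simp

definition supermajority :: "nat \<Rightarrow> nat set \<Rightarrow> bool" where
  "supermajority n Q \<longleftrightarrow> Q \<subseteq> {..<n} \<and> real (card Q) \<ge> 2/3 * real n"

lemma supermajority_intersection_witnesses:
  assumes Q1: "supermajority n Q1" and Q2: "supermajority n Q2"
    and P: "\<And>v. v \<in> Q1 \<inter> Q2 \<Longrightarrow> P v"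
  shows "\<exists>D \<subseteq> {..<n}. real (card D) \<ge> real n / 3 \<and> (\<forall>v\<in>D. P v)"
proof (intro exI conjI)
  have "finite Q1" "finite Q2" "card (Q1 \<union> Q2) \<le> n"
    using Q1 Q2 unfolding supermajority_def
    by (auto intro: finite_subset) (metis card_lessThan card_mono finite_lessThan le_sup_iff)
  moreover from \<open>finite Q1\<close> \<open>finite Q2\<close>
  have "card (Q1 \<union> Q2) + card (Q1 \<inter> Q2) = card Q1 + card Q2"
    by (rule card_Un_Int[symmetric])
  ultimately show "real (card (Q1 \<inter> Q2)) \<ge> real n / 3"
    using Q1 Q2 unfolding supermajority_def by linarith
qed (use Q1 P in \<open>auto simp: supermajority_def\<close>)

lemma justified_quorum:
  assumes "justified parent genesis n V C" and "C \<noteq> (genesis, 0)"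
  obtains Q where "supermajority n Q"
    and "\<forall>v\<in>Q. \<exists>S T. (v, S, T) \<in> V \<and> valid_ffg parent S T \<and> justified parent genesis n V S \<and>
           prefix_chain parent (fst S) (fst C) \<and> prefix_chain parent (fst C) (fst T) \<and>
           snd T = snd C"
  using assms by cases (auto simp: supermajority_def)

lemma finalized_justified:
  "finalized parent genesis n V C \<Longrightarrow> justified parent genesis n V C"
  unfolding finalized_def by (auto intro: justified.genesis_just)

lemma finalized_quorum:
  assumes "finalized parent genesis n V C" and "C \<noteq> (genesis, 0)"
  obtains Q where "supermajority n Q"
    and "\<forall>v\<in>Q. \<exists>T. (v, C, T) \<in> V \<and> snd T = snd C + 1"
  using assms unfolding finalized_def supermajority_def by blast

lemma finality_vote_surrounded:
  assumes "(v, C, T') \<in> M" and "snd T' = snd C + 1"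
    and "(v, S, T) \<in> M" and "snd C < snd T" and "ck_less slot S C"
  shows "violates_E1 M v \<or> violates_E2 slot M v"
proof -
  have "(C, T') \<noteq> (S, T)"
    using assms(5) unfolding ck_less_def by auto
  moreover have "snd T' = snd T \<or> snd T' < snd T"
    using assms(2,4) by linarith
  ultimately show ?thesis
    using assms(1,3,5) unfolding violates_E1_def violates_E2_def by (elim disjE) blast+
qed

lemma conflicting_justified_same_epoch:
  assumes bs: "block_structure parent slot genesis"
    and A: "justified parent genesis n V1 A" and B: "justified parent genesis n V2 B"
    and "snd A = snd B" and conf: "conflicting parent (fst A) (fst B)"
  shows "\<exists>D \<subseteq> {..<n}. real (card D) \<ge> real n / 3 \<and> (\<forall>v\<in>D. violates_E1 (V1 \<union> V2) v)"
proof -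
  have "A \<noteq> (genesis, 0)" "B \<noteq> (genesis, 0)"
    using conf prefix_chain_genesis[OF bs] unfolding conflicting_def by auto
  then obtain QA QB where QA_maj: "supermajority n QA" and QB_maj: "supermajority n QB"
    and QA: "\<forall>v\<in>QA. \<exists>S T. (v, S, T) \<in> V1 \<and> prefix_chain parent (fst A) (fst T) \<and> snd T = snd A"
    and QB: "\<forall>v\<in>QB. \<exists>S T. (v, S, T) \<in> V2 \<and> prefix_chain parent (fst B) (fst T) \<and> snd T = snd B"
    using justified_quorum[OF A] justified_quorum[OF B] by metis
  from QA_maj QB_maj show ?thesis
  proof (rule supermajority_intersection_witnesses)
    fix v assume "v \<in> QA \<inter> QB"
    then obtain S T S' T' where "(v, S, T) \<in> V1" "(v, S', T') \<in> V2" "snd T = snd T'"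
      and AT: "prefix_chain parent (fst A) (fst T)" and BT': "prefix_chain parent (fst B) (fst T')"
      using QA QB \<open>snd A = snd B\<close> by fastforce
    moreover have "T \<noteq> T'"
    proof
      assume "T = T'"
      from prefix_chain_linear[OF AT BT'[folded this]] show False
        using conf unfolding conflicting_def by blast
    qed
    ultimately show "violates_E1 (V1 \<union> V2) v"
      unfolding violates_E1_def by blast
  qed
qed

lemma least_escape_source_precedes:
  assumes bs: "block_structure parent slot genesis"
    and no_conflict: "\<And>S. justified parent genesis n V S \<Longrightarrow> snd S = snd C \<Longrightarrow>
                         \<not> conflicting parent (fst C) (fst S)"
    and least: "\<And>J'. justified parent genesis n V J' \<Longrightarrow> snd C < snd J' \<Longrightarrow>
                   \<not> prefix_chain parent (fst C) (fst J') \<Longrightarrow> snd J \<le> snd J'"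
    and CJ: "\<not> prefix_chain parent (fst C) (fst J)"
    and S: "justified parent genesis n V S" "snd S < snd J" "prefix_chain parent (fst S) (fst J)"
  shows "ck_less slot S C"
proof -
  have CS: "\<not> prefix_chain parent (fst C) (fst S)"
    using S(3) CJ prefix_chain_trans by metis
  then have "snd S \<le> snd C"
    using least[OF S(1)] S(2) by fastforce
  moreover have "slot (fst S) < slot (fst C)" if "snd S = snd C"
  proof (rule prefix_chain_slot_less[OF bs])
    show "prefix_chain parent (fst S) (fst C)"
      using no_conflict[OF S(1) that] CS unfolding conflicting_def by blast
    show "fst S \<noteq> fst C"
      using CS prefix_chain_refl by metis
  qed
  ultimately show ?thesis
    unfolding ck_less_def ck_le_def by auto
qed

lemma finalized_conflicting_later_justified:
  assumes bs: "block_structure parent slot genesis" and "n > 0"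
    and fin: "finalized parent genesis n V1 C"
    and jC': "justified parent genesis n V2 C'"
    and "snd C < snd C'" and "\<not> prefix_chain parent (fst C) (fst C')"
  shows "\<exists>D \<subseteq> {..<n}. real (card D) \<ge> real n / 3 \<and>
           (\<forall>v\<in>D. violates_E1 (V1 \<union> V2) v \<or> violates_E2 slot (V1 \<union> V2) v)"
proof (cases "\<exists>S. justified parent genesis n V2 S \<and> snd S = snd C \<and>
                   conflicting parent (fst C) (fst S)")
  case True
  then show ?thesis
    using conflicting_justified_same_epoch[OF bs finalized_justified[OF fin]] by fastforce
next
  case no_conflict: False
  define escapes where "escapes J \<longleftrightarrow> justified parent genesis n V2 J \<and> snd C < snd J \<and>
     \<not> prefix_chain parent (fst C) (fst J)" for J
  have "escapes C'"
    using jC' assms(5,6) by (simp add: escapes_def)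
  then obtain J where "escapes J" and least: "\<And>J'. escapes J' \<Longrightarrow> snd J \<le> snd J'"
    by (rule ex_least_int_bounded_below[where f = snd and a = "snd C"]) (auto simp: escapes_def)
  from \<open>escapes J\<close> have jJ: "justified parent genesis n V2 J" and "snd C < snd J"
    and CJ: "\<not> prefix_chain parent (fst C) (fst J)"
    by (auto simp: escapes_def)
  have "C \<noteq> (genesis, 0)"
    using CJ prefix_chain_genesis[OF bs] by auto
  then obtain QC where "supermajority n QC" and QC: "\<forall>v\<in>QC. \<exists>T. (v, C, T) \<in> V1 \<and> snd T = snd C + 1"
    by (rule finalized_quorum[OF fin])
  have "J \<noteq> (genesis, 0)"
    using \<open>snd C < snd J\<close> justified_epoch_nonneg[OF finalized_justified[OF fin] \<open>n > 0\<close>] by auto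
  then obtain QJ where "supermajority n QJ"
    and QJ: "\<forall>v\<in>QJ. \<exists>S T. (v, S, T) \<in> V2 \<and> valid_ffg parent S T \<and> justified parent genesis n V2 S \<and>
           prefix_chain parent (fst S) (fst J) \<and> prefix_chain parent (fst J) (fst T) \<and> snd T = snd J"
    by (rule justified_quorum[OF jJ])
  have surrounded: "ck_less slot S C"
    if "justified parent genesis n V2 S" "snd S < snd J" "prefix_chain parent (fst S) (fst J)" for S
    using least_escape_source_precedes[OF bs _ _ CJ that] no_conflict least[unfolded escapes_def]
    by blast
  from \<open>supermajority n QC\<close> \<open>supermajority n QJ\<close> show ?thesis
  proof (rule supermajority_intersection_witnesses)
    fix v assume "v \<in> QC \<inter> QJ"
    then obtain T' where "(v, C, T') \<in> V1" "snd T' = snd C + 1"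
      using QC by blast
    moreover obtain S T where "(v, S, T) \<in> V2" "valid_ffg parent S T" "justified parent genesis n V2 S"
        "prefix_chain parent (fst S) (fst J)" "snd T = snd J"
      using QJ \<open>v \<in> QC \<inter> QJ\<close> by blast
    moreover have "ck_less slot S C"
      using surrounded calculation(4-7) unfolding valid_ffg_def by simp
    ultimately show "violates_E1 (V1 \<union> V2) v \<or> violates_E2 slot (V1 \<union> V2) v"
      using \<open>snd C < snd J\<close> by (intro finality_vote_surrounded[where T' = T' and S = S and T = T]) auto
  qed
qed

theorem lemma4p2:
  fixes parent :: "'b \<Rightarrow> 'b option" and slot :: "'b \<Rightarrow> int" and genesis :: 'b
    and n :: nat and f :: real
    and V1 V2 :: "'b vote_msg set" and x1 x2 :: 'b
  assumes "block_structure parent slot genesis"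
    and "0 \<le> f" and "f \<le> real n"
    and "chain_finalized parent genesis n V1 x1"
    and "chain_finalized parent genesis n V2 x2"
    and "conflicting parent x1 x2"
  shows "\<exists>D \<subseteq> {..<n}. real (card D) \<ge> real n / 3 \<and>
           (\<forall>v\<in>D. violates_E1 (V1 \<union> V2) v \<or> violates_E2 slot (V1 \<union> V2) v)"
proof (cases "n = 0")
  case True
  then show ?thesis by auto
next
  case False
  obtain C1 C2 where fin1: "finalized parent genesis n V1 C1" and fin2: "finalized parent genesis n V2 C2"
    and conf: "conflicting parent (fst C1) (fst C2)"
    using assms(4-6) conflicting_extensions unfolding chain_finalized_def by metis
  note later = finalized_conflicting_later_justified[OF assms(1)]
  consider "snd C1 = snd C2" | "snd C1 < snd C2" | "snd C2 < snd C1" by linarith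
  then show ?thesis
  proof cases
    case 1
    then show ?thesis
      using conflicting_justified_same_epoch[OF assms(1) fin1[THEN finalized_justified]
          fin2[THEN finalized_justified] _ conf] by blast
  next
    case 2
    then show ?thesis
      using later[OF _ fin1 finalized_justified[OF fin2]] False conf
      unfolding conflicting_def by blast
  next
    case 3
    then show ?thesis
      using later[OF _ fin2 finalized_justified[OF fin1]] False conf
      unfolding conflicting_def by (simp add: Un_commute)
  qed
qed

end
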